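(* For every $a,b>0$ and $s\in(-2a,b)$, with the two summands independent, $$\mathbb{E}\left[(\mathbf{B}'_{a,b}+\mathbf{B}'_{a,b})^s\right]=\frac{2^{2a+s}\,\Gamma(a+b)^2\,\Gamma(2b-s)\,\Gamma(2a+s)}{\Gamma(2a)\Gamma(b)^2\Gamma(2a+2b)}\;{}_3F_2\!\left(a+\tfrac s2,\,a+\tfrac{s+1}{2},\,\tfrac12;\,a+\tfrac12,\,a+b+\tfrac12;\,1\right).$$
   Context: For $p,q>0$, $\mathbf{B}'_{p,q}$ denotes a beta prime random variable with density $\frac{\Gamma(p+q)}{\Gamma(p)\Gamma(q)}\frac{x^{p-1}}{(1+x)^{p+q}}$ on $(0,\infty)$. ${}_3F_2(\alpha_1,\alpha_2,\alpha_3;\beta_1,\beta_2;z)=\sum_{n\ge0}\frac{(\alpha_1)_n(\alpha_2)_n(\alpha_3)_n}{(\beta_1)_n(\beta_2)_n\,n!}z^n$ is the generalized hypergeometric series, $(x)_n$ the Pochhammer symbol. *)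

theory Defs
  imports "HOL-Probability.Probability"
begin

definition beta_prime_density :: "real \<Rightarrow> real \<Rightarrow> real \<Rightarrow> real" where
  "beta_prime_density p q x =
     (if 0 < x then Gamma (p + q) / (Gamma p * Gamma q) * x powr (p - 1) / (1 + x) powr (p + q)
      else 0)"

definition hyp3F2 :: "real \<Rightarrow> real \<Rightarrow> real \<Rightarrow> real \<Rightarrow> real \<Rightarrow> real \<Rightarrow> real" where
  "hyp3F2 a1 a2 a3 b1 b2 z =
     (\<Sum>n. pochhammer a1 n * pochhammer a2 n * pochhammer a3 n
            / (pochhammer b1 n * pochhammer b2 n * fact n) * z ^ n)"

end

(*
  In the coordinates x = u (1 + v), y = u (1 - v) the product of two beta prime densities is, up
  to a constant, u^(2a-2) (1 - v^2)^(a-1) (1 + u)^(-2a-2b) (1 - (u v / (1 + u))^2)^(-(a+b)),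
  because (1 + x) (1 + y) = (1 + u)^2 - (u v)^2.  Expanding the last factor by the binomial series
  separates the variables: term by term, the u-integral is the beta prime integral
  B(2a + s + 2n, 2b - s) and the v-integral is B(n + 1/2, a).  The duplication formula for the
  Pochhammer symbol (and Legendre's for Gamma) turns these coefficients into those of the 3F2
  series at 1.  This is an identity of nonnegative extended reals; the moment is finite for s < b
  because (x + y)^s is bounded by a product phi(x) phi(y) of functions with finite one-dimensional
  beta prime moments.
*)

theory Submission
  imports Defs "HOL-Real_Asymp.Real_Asymp"
begin

lemma Gamma_real_neq_0: "0 < x \<Longrightarrow> Gamma (x :: real) \<noteq> 0"
  using Gamma_real_pos[of x] by linarith

lemma Beta_real_pos: "0 < x \<Longrightarrow> 0 < y \<Longrightarrow> 0 < Beta (x :: real) y"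
  by (simp add: Beta_def)

lemma pochhammer_Gamma_pos:
  fixes z :: real
  assumes "0 < z"
  shows "pochhammer z n = Gamma (z + real n) / Gamma z"
  using assms by (intro pochhammer_Gamma) (auto elim!: nonpos_Ints_cases)

lemma Gamma_double_add_nat:
  fixes z :: real
  assumes "0 < z"
  shows "Gamma (2 * z + 2 * real n) = 4 ^ n * pochhammer z n * pochhammer (z + 1/2) n * Gamma (2 * z)"
proof -
  have "Gamma (2 * z) \<noteq> 0"
    using assms by (simp add: Gamma_real_neq_0)
  then have "Gamma (2 * z + 2 * real n) = pochhammer (2 * z) (2 * n) * Gamma (2 * z)"
    using pochhammer_Gamma_pos[of "2 * z" "2 * n"] assms by simp
  then show ?thesis
    by (simp add: pochhammer_double power_mult)
qed

lemma Gamma_legendre_duplication_real: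
  fixes z :: real
  assumes "0 < z"
  shows "Gamma (2 * z) = 2 powr (2 * z - 1) * Gamma z * Gamma (z + 1/2) / sqrt pi"
proof -
  have "complex_of_real z \<notin> \<int>\<^sub>\<le>\<^sub>0" "complex_of_real z + 1/2 \<notin> \<int>\<^sub>\<le>\<^sub>0"
    using assms by (auto elim!: nonpos_Ints_cases simp: complex_eq_iff)
  from Gamma_legendre_duplication[OF this]
  have "Gamma (complex_of_real z) * Gamma (complex_of_real z + 1/2) =
          exp ((1 - 2 * complex_of_real z) * of_real (ln 2)) * of_real (sqrt pi) * Gamma (2 * complex_of_real z)" .
  also have "complex_of_real z + 1/2 = complex_of_real (z + 1/2)" by simp
  also have "2 * complex_of_real z = complex_of_real (2 * z)" by simp
  also have "(1 - complex_of_real (2 * z)) * of_real (ln 2) = complex_of_real ((1 - 2 * z) * ln 2)" by simp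
  finally have "Gamma z * Gamma (z + 1/2) = exp ((1 - 2 * z) * ln 2) * sqrt pi * Gamma (2 * z)"
    by (simp only: Gamma_complex_of_real exp_of_real of_real_mult[symmetric] of_real_eq_iff)
  also have "exp ((1 - 2 * z) * ln 2) = 2 powr (- (2 * z - 1))"
    by (simp add: powr_def mult.commute)
  also have "\<dots> = 1 / 2 powr (2 * z - 1)"
    by (rule powr_minus_divide)
  finally show ?thesis by (simp add: field_simps)
qed

lemma pochhammer_binomial_sums:
  fixes z c :: real
  assumes "\<bar>z\<bar> < 1"
  shows "(\<lambda>n. pochhammer c n / fact n * z ^ n) sums (1 - z) powr (- c)"
proof -
  have "((- c) gchoose n) * (- z) ^ n = pochhammer c n / fact n * z ^ n" for n
  proof -
    have "((- c) gchoose n) * (- z) ^ n = ((- 1) ^ n * (- 1) ^ n) * (pochhammer c n / fact n * z ^ n)"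
      by (simp add: gbinomial_pochhammer power_minus[of z])
    also have "(- 1 :: real) ^ n * (- 1) ^ n = 1"
      by (simp flip: power_add)
    finally show ?thesis by simp
  qed
  with gen_binomial_real[of "- z" "- c"] assms show ?thesis by simp
qed

lemma power2_powr:
  fixes x c :: real
  assumes "0 \<le> x"
  shows "(x\<^sup>2) powr c = x powr (2 * c)"
proof (cases "x = 0")
  case False
  then have "x\<^sup>2 = x powr 2"
    using assms by (simp add: powr_realpow)
  then show ?thesis
    by (simp add: powr_powr)
qed simp

lemma powr_mult_power: "0 < x \<Longrightarrow> x powr c * x ^ n = x powr (c + real n)"
  for x c :: real
  by (simp add: powr_add powr_realpow)

definition hyp3F2_coeff :: "real \<Rightarrow> real \<Rightarrow> real \<Rightarrow> real \<Rightarrow> real \<Rightarrow> nat \<Rightarrow> real" where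
  "hyp3F2_coeff a1 a2 a3 b1 b2 n =
     pochhammer a1 n * pochhammer a2 n * pochhammer a3 n / (pochhammer b1 n * pochhammer b2 n * fact n)"

lemma hyp3F2_one: "hyp3F2 a1 a2 a3 b1 b2 1 = (\<Sum>n. hyp3F2_coeff a1 a2 a3 b1 b2 n)"
  by (simp add: hyp3F2_def hyp3F2_coeff_def)

lemma hyp3F2_coeff_pos:
  "0 < a1 \<Longrightarrow> 0 < a2 \<Longrightarrow> 0 < a3 \<Longrightarrow> 0 < b1 \<Longrightarrow> 0 < b2 \<Longrightarrow> 0 < hyp3F2_coeff a1 a2 a3 b1 b2 n"
  by (simp add: hyp3F2_coeff_def pochhammer_pos)

lemma beta_prime_series_coeff_eq:
  fixes a b s :: real
  assumes a: "0 < a" and b: "0 < b" and s: "0 < 2 * a + s" "0 < 2 * b - s"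
  shows "(Gamma (a + b) / (Gamma a * Gamma b)) ^ 2 * 2 powr (s + 1) * pochhammer (a + b) n / fact n
           * Beta (2 * a + s + 2 * real n) (2 * b - s) * Beta (real n + 1/2) a
       = 2 powr (2 * a + s) * Gamma (a + b) ^ 2 * Gamma (2 * b - s) * Gamma (2 * a + s)
           / (Gamma (2 * a) * Gamma b ^ 2 * Gamma (2 * a + 2 * b))
         * hyp3F2_coeff (a + s / 2) (a + (s + 1) / 2) (1 / 2) (a + 1 / 2) (a + b + 1 / 2) n"
proof -
  have as: "0 < a + s / 2" using s by simp
  have "Gamma (2 * a + s + 2 * real n) = Gamma (2 * (a + s / 2) + 2 * real n)"
    by (simp add: algebra_simps)
  also have "\<dots> = 4 ^ n * pochhammer (a + s / 2) n * pochhammer (a + (s + 1) / 2) n * Gamma (2 * a + s)"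
    using Gamma_double_add_nat[OF as] by (simp add: add_divide_distrib algebra_simps)
  finally have num: "Gamma (2 * a + s + 2 * real n) = \<dots>" .
  have "Gamma (2 * a + s + 2 * real n + (2 * b - s)) = Gamma (2 * (a + b) + 2 * real n)"
    by (simp add: algebra_simps)
  also have "\<dots> = 4 ^ n * pochhammer (a + b) n * pochhammer (a + b + 1 / 2) n * Gamma (2 * a + 2 * b)"
    using Gamma_double_add_nat[of "a + b" n] a b by (simp add: algebra_simps)
  finally have den: "Gamma (2 * a + s + 2 * real n + (2 * b - s)) = \<dots>" .
  have half: "Gamma (real n + 1/2) = sqrt pi * pochhammer (1 / 2) n"
    using pochhammer_Gamma_pos[of "1/2" n] by (simp add: Gamma_one_half_real add.commute)
  have ahalf: "Gamma (real n + 1/2 + a) = Gamma (a + 1/2) * pochhammer (a + 1 / 2) n"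
    using pochhammer_Gamma_pos[of "a + 1/2" n] a by (simp add: Gamma_real_neq_0 algebra_simps)
  have pow2: "(2 :: real) powr (2 * a + s) = 2 powr (s + 1) * 2 powr (2 * a - 1)"
    by (simp add: add.commute flip: powr_add)
  have nz: "Gamma a \<noteq> 0" "Gamma b \<noteq> 0" "Gamma (a + 1/2) \<noteq> 0" "Gamma (2 * a + 2 * b) \<noteq> 0"
    "pochhammer (a + b) n \<noteq> 0" "pochhammer (a + b + 1/2) n \<noteq> 0" "pochhammer (a + 1/2) n \<noteq> 0"
    "sqrt pi \<noteq> 0"
    using a b by (auto simp: Gamma_real_neq_0 pochhammer_eq_0_iff)
  show ?thesis
    unfolding Beta_def hyp3F2_coeff_def num den half ahalf Gamma_legendre_duplication_real[OF a] pow2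
    using nz by (simp add: field_simps power2_eq_square)
qed

lemma beta_prime_kernel_odds_substitution:
  fixes p q t :: real
  assumes "0 < t" "t < 1"
  shows "(t / (1 - t)) powr (p - 1) / (1 + t / (1 - t)) powr (p + q) * (1 / (1 - t)\<^sup>2)
       = t powr (p - 1) * (1 - t) powr (q - 1)"
proof -
  have "1 + t / (1 - t) = 1 / (1 - t)" and "(1 - t) powr 2 = (1 - t)\<^sup>2"
    using assms by (simp_all add: field_simps powr_realpow)
  moreover have "(1 - t) powr (p + q) = (1 - t) powr (p - 1) * (1 - t) powr 2 * (1 - t) powr (q - 1)"
    by (simp flip: powr_add)
  ultimately show ?thesis
    using assms by (simp add: powr_divide field_simps)
qed

lemma tendsto_odds_ereal:
  "((ereal \<circ> (\<lambda>t. t / (1 - t)) \<circ> real_of_ereal) \<longlongrightarrow> 0) (at_right 0)"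
  "((ereal \<circ> (\<lambda>t. t / (1 - t)) \<circ> real_of_ereal) \<longlongrightarrow> \<infinity>) (at_left 1)"
proof -
  have "((\<lambda>t::real. t / (1 - t)) \<longlongrightarrow> 0) (at_right 0)" "filterlim (\<lambda>t::real. t / (1 - t)) at_top (at_left 1)"
    by real_asymp+
  then show "((ereal \<circ> (\<lambda>t. t / (1 - t)) \<circ> real_of_ereal) \<longlongrightarrow> 0) (at_right 0)"
    "((ereal \<circ> (\<lambda>t. t / (1 - t)) \<circ> real_of_ereal) \<longlongrightarrow> \<infinity>) (at_left 1)"
    unfolding zero_ereal_def one_ereal_def ereal_tendsto_simps comp_assoc [symmetric]
    by (simp_all add: comp_def)
qed

lemma has_integral_beta_prime_kernel:
  fixes p q :: real
  assumes p: "0 < p" and q: "0 < q"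
  shows "((\<lambda>x. x powr (p - 1) / (1 + x) powr (p + q)) has_integral Beta p q) {0<..}"
proof -
  define f where "f x = x powr (p - 1) / (1 + x) powr (p + q)" for x :: real
  define g where "g t = t / (1 - t)" for t :: real
  define g' where "g' t = 1 / (1 - t)\<^sup>2" for t :: real
  define h where "h t = t powr (p - 1) * (1 - t) powr (q - 1)" for t :: real
  have fg: "f (g t) * g' t = h t" if "0 < t" "t < 1" for t
    unfolding f_def g_def g'_def h_def using that by (rule beta_prime_kernel_odds_substitution)
  note lim = tendsto_odds_ereal [folded g_def]
  have h: "set_integrable lborel {0..1} h"
    unfolding h_def using integrable_Beta[OF p q] .
  have "set_integrable lborel {0<..<1} h"
    by (rule set_integrable_subset[OF h]) auto
  moreover have "set_integrable lborel {0<..<1} h = set_integrable lborel {0<..<1} (\<lambda>t. f (g t) * g' t)"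
    by (rule set_integrable_cong) (auto simp: fg)
  ultimately have fg_int: "set_integrable lborel (einterval 0 1) (\<lambda>t. f (g t) * g' t)"
    by (simp add: zero_ereal_def one_ereal_def)
  have subst_prems: "DERIV g t :> g' t" "isCont f (g t)" "isCont g' t" "0 \<le> f (g t)"
    if "0 < ereal t" "ereal t < 1" for t
  proof -
    have t: "0 < t" "t < 1" using that by simp_all
    then show "DERIV g t :> g' t" unfolding g_def g'_def
      by (auto intro!: derivative_eq_intros simp: field_simps power2_eq_square)
    have "0 < g t" using t by (simp add: g_def)
    then show "isCont f (g t)" "0 \<le> f (g t)"
      unfolding f_def by (auto intro!: continuous_intros)
    show "isCont g' t"
      using t unfolding g'_def by (auto intro!: continuous_intros)
  qed
  note subst = interval_integral_substitution_nonneg[of 0 1 g g' f, OF _ _ _ _ _ _ lim fg_int]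
  have f_int: "set_integrable lborel {0<..} f"
    using subst(1) subst_prems by (simp add: zero_ereal_def g'_def)
  have "(LBINT x:{0<..}. f x) = (LBINT x=0..\<infinity>. f x)"
    by (simp add: interval_lebesgue_integral_0_infty)
  also have "\<dots> = (LBINT t=0..1. f (g t) * g' t)"
    using subst(2) subst_prems by (simp add: g'_def)
  also have "\<dots> = (LBINT t=0..1. h t)"
    by (rule interval_integral_cong) (auto simp: fg zero_ereal_def one_ereal_def)
  also have "\<dots> = integral {0..1} h"
    using interval_integral_Icc[of 0 1 h] set_borel_integral_eq_integral(2)[OF h]
    by (simp add: zero_ereal_def one_ereal_def)
  also have "\<dots> = Beta p q"
    unfolding h_def using has_integral_Beta_real[OF p q] by (rule integral_unique)
  finally show ?thesis
    using set_borel_integral_eq_integral[OF f_int] unfolding f_def by (metis has_integral_integral)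
qed

lemma nn_integral_beta_prime_kernel:
  fixes p q :: real
  assumes "0 < p" "0 < q"
  shows "(\<integral>\<^sup>+x. ennreal (x powr (p - 1) / (1 + x) powr (p + q)) * indicator {0<..} x \<partial>lborel)
         = ennreal (Beta p q)"
  using nn_integral_has_integral_lebesgue'[OF _ has_integral_beta_prime_kernel[OF assms]] by simp

lemma nn_integral_even_symmetric:
  fixes q :: "real \<Rightarrow> ennreal" and c :: real
  assumes [measurable]: "q \<in> borel_measurable borel" and even: "\<And>v. q (- v) = q v"
  shows "(\<integral>\<^sup>+v. q v * indicator {-c<..<c} v \<partial>lborel) = 2 * (\<integral>\<^sup>+v. q v * indicator {0..c} v \<partial>lborel)"
proof -
  have "(\<integral>\<^sup>+v. q v * indicator {0..c} v \<partial>lborel) = (\<integral>\<^sup>+v. q v * indicator {-c..0} v \<partial>lborel)"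
    using nn_integral_real_affine[of "\<lambda>v. q v * indicator {0..c} v" "-1" 0]
    by (simp add: even indicator_def minus_le_iff conj_commute)
  then have "2 * (\<integral>\<^sup>+v. q v * indicator {0..c} v \<partial>lborel)
      = (\<integral>\<^sup>+v. q v * (indicator {0..c} v + indicator {-c..0} v) \<partial>lborel)"
    by (simp add: mult_2 distrib_left nn_integral_add)
  also have "\<dots> = (\<integral>\<^sup>+v. q v * indicator {-c<..<c} v \<partial>lborel)"
    by (intro nn_integral_cong_AE AE_I[of _ _ "{-c, 0, c}"]) (auto simp: indicator_def emeasure_lborel_countable)
  finally show ?thesis ..
qed

lemma nn_integral_even_power_beta_kernel:
  fixes a :: real and n :: nat
  assumes a: "0 < a"
  shows "(\<integral>\<^sup>+v. ennreal (v ^ (2 * n) * (1 - v\<^sup>2) powr (a - 1)) * indicator {-1<..<1} v \<partial>lborel)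
         = ennreal (Beta (real n + 1/2) a)"
proof -
  define q where "q v = v ^ (2 * n) * (1 - v\<^sup>2) powr (a - 1)" for v :: real
  have "((\<lambda>t. t powr (real n + 1/2 - 1) * (1 - t) powr (a - 1)) has_integral Beta (real n + 1/2) a) {0..1}"
    using has_integral_Beta_real[of "real n + 1/2" a] a by simp
  from nn_integral_has_integral_lebesgue'[OF _ this]
  have "ennreal (Beta (real n + 1/2) a) =
      (\<integral>\<^sup>+t. ennreal (t powr (real n + 1/2 - 1) * (1 - t) powr (a - 1) * indicator {0\<^sup>2..1\<^sup>2} t) \<partial>lborel)"
    by (simp add: ennreal_mult' ennreal_indicator)
  also have "\<dots> = (\<integral>\<^sup>+v. ennreal ((v\<^sup>2) powr (real n + 1/2 - 1) * (1 - v\<^sup>2) powr (a - 1)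
                       * (2 * v) * indicator {0..1} v) \<partial>lborel)"
    by (subst nn_integral_substitution[where g = "\<lambda>v. v\<^sup>2" and g' = "\<lambda>v. 2 * v"])
       (auto intro!: derivative_eq_intros continuous_intros simp: set_borel_measurable_def)
  also have "\<dots> = (\<integral>\<^sup>+v. 2 * (ennreal (q v) * indicator {0..1} v) \<partial>lborel)"
  proof (intro nn_integral_cong_AE eventually_mono[OF AE_lborel_singleton[of 0]])
    fix v :: real
    assume "v \<noteq> 0"
    show "ennreal ((v\<^sup>2) powr (real n + 1/2 - 1) * (1 - v\<^sup>2) powr (a - 1) * (2 * v) * indicator {0..1} v)
        = 2 * (ennreal (q v) * indicator {0..1} v)"
    proof (cases "v \<in> {0..1}")
      case True
      with \<open>v \<noteq> 0\<close> have v: "0 < v" by simp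
      have "(v\<^sup>2) powr (real n + 1/2 - 1) * v = v powr (2 * real n - 1) * v"
        using v by (simp add: power2_powr algebra_simps)
      also have "\<dots> = v ^ (2 * n)"
        using v by (simp add: powr_diff powr_realpow [symmetric])
      finally have eq: "(v\<^sup>2) powr (real n + 1/2 - 1) * (1 - v\<^sup>2) powr (a - 1) * (2 * v) * indicator {0..1} v
          = 2 * q v"
        using True unfolding q_def by (simp add: mult_ac)
      show ?thesis
        unfolding eq using True by (simp add: ennreal_mult q_def)
    qed simp
  qed
  also have "\<dots> = (\<integral>\<^sup>+v. ennreal (q v) * indicator {-1<..<1} v \<partial>lborel)"
    by (subst nn_integral_even_symmetric) (auto simp: q_def nn_integral_cmult)
  finally show ?thesis
    unfolding q_def ..
qed

lemma nn_integral_lborel_sum_diff: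
  fixes G :: "real \<Rightarrow> real \<Rightarrow> ennreal"
  assumes G: "(\<lambda>(x, y). G x y) \<in> borel_measurable (borel \<Otimes>\<^sub>M borel)"
  shows "(\<integral>\<^sup>+y. \<integral>\<^sup>+x. G x y \<partial>lborel \<partial>lborel)
       = (\<integral>\<^sup>+u. ennreal (2 * \<bar>u\<bar>) * (\<integral>\<^sup>+v. G (u + u * v) (u - u * v) \<partial>lborel) \<partial>lborel)"
proof -
  have [measurable]: "(\<lambda>\<omega>. G (f \<omega>) (g \<omega>)) \<in> borel_measurable N"
    if "f \<in> borel_measurable N" "g \<in> borel_measurable N" for f g and N :: "'a measure"
    using measurable_compose[OF measurable_Pair[OF that] G] by simp
  have "(\<integral>\<^sup>+x. G x y \<partial>lborel) = (\<integral>\<^sup>+t. G (t - y) y \<partial>lborel)" for y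
    using nn_integral_real_affine[of "\<lambda>x. G x y" 1 "- y"] by simp
  then have "(\<integral>\<^sup>+y. \<integral>\<^sup>+x. G x y \<partial>lborel \<partial>lborel)
      = (\<integral>\<^sup>+y. \<integral>\<^sup>+t. G (t - y) y \<partial>lborel \<partial>lborel)"
    by simp
  also have "\<dots> = (\<integral>\<^sup>+t. \<integral>\<^sup>+y. G (t - y) y \<partial>lborel \<partial>lborel)"
    by (rule lborel_pair.Fubini') simp
  also have "\<dots> = (\<integral>\<^sup>+t. ennreal \<bar>t / 2\<bar> * (\<integral>\<^sup>+v. G (t / 2 + t / 2 * v) (t / 2 - t / 2 * v) \<partial>lborel)
                   \<partial>lborel)"
  proof (intro nn_integral_cong_AE eventually_mono[OF AE_lborel_singleton[of 0]])
    fix t :: real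
    assume "t \<noteq> 0"
    then show "(\<integral>\<^sup>+y. G (t - y) y \<partial>lborel)
             = ennreal \<bar>t / 2\<bar> * (\<integral>\<^sup>+v. G (t / 2 + t / 2 * v) (t / 2 - t / 2 * v) \<partial>lborel)"
      using nn_integral_real_affine[of "\<lambda>y. G (t - y) y" "- (t / 2)" "t / 2"]
      by (simp add: algebra_simps)
  qed
  also have "\<dots> = ennreal 2 * (\<integral>\<^sup>+u. ennreal \<bar>u\<bar> * (\<integral>\<^sup>+v. G (u + u * v) (u - u * v) \<partial>lborel) \<partial>lborel)"
    using nn_integral_real_affine[of "\<lambda>t. ennreal \<bar>t / 2\<bar> * (\<integral>\<^sup>+v. G (t / 2 + t / 2 * v) (t / 2 - t / 2 * v) \<partial>lborel)" 2 0]
    by simp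
  also have "\<dots> = (\<integral>\<^sup>+u. ennreal (2 * \<bar>u\<bar>) * (\<integral>\<^sup>+v. G (u + u * v) (u - u * v) \<partial>lborel) \<partial>lborel)"
    by (simp add: ennreal_mult mult.assoc flip: nn_integral_cmult)
  finally show ?thesis .
qed

lemma nn_integral_suminf_products:
  fixes A B :: "nat \<Rightarrow> real \<Rightarrow> ennreal"
  assumes [measurable]: "\<And>n. A n \<in> borel_measurable borel" "\<And>n. B n \<in> borel_measurable borel"
  shows "(\<integral>\<^sup>+u. \<integral>\<^sup>+v. (\<Sum>n. A n u * B n v) \<partial>lborel \<partial>lborel)
       = (\<Sum>n. (\<integral>\<^sup>+u. A n u \<partial>lborel) * (\<integral>\<^sup>+v. B n v \<partial>lborel))"
proof -
  have "(\<integral>\<^sup>+v. (\<Sum>n. A n u * B n v) \<partial>lborel) = (\<Sum>n. A n u * (\<integral>\<^sup>+v. B n v \<partial>lborel))" for u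
    by (simp add: nn_integral_suminf nn_integral_cmult)
  then have "(\<integral>\<^sup>+u. \<integral>\<^sup>+v. (\<Sum>n. A n u * B n v) \<partial>lborel \<partial>lborel)
      = (\<integral>\<^sup>+u. (\<Sum>n. A n u * (\<integral>\<^sup>+v. B n v \<partial>lborel)) \<partial>lborel)"
    by simp
  also have "\<dots> = (\<Sum>n. (\<integral>\<^sup>+u. A n u \<partial>lborel) * (\<integral>\<^sup>+v. B n v \<partial>lborel))"
    by (simp add: nn_integral_suminf nn_integral_multc)
  finally show ?thesis .
qed

lemma beta_prime_density_nonneg: "0 < p \<Longrightarrow> 0 < q \<Longrightarrow> 0 \<le> beta_prime_density p q x"
  unfolding beta_prime_density_def by simp

lemma beta_prime_density_nonpos: "x \<le> 0 \<Longrightarrow> beta_prime_density p q x = 0"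
  unfolding beta_prime_density_def by simp

lemma borel_measurable_beta_prime_density [measurable]:
  "beta_prime_density p q \<in> borel_measurable borel"
  unfolding beta_prime_density_def[abs_def] by measurable

lemma nn_integral_beta_prime_powr_mult:
  fixes p q r k :: real
  assumes p: "0 < p" and q: "0 < q" and r: "- p < r" and k: "r + k < q"
  shows "(\<integral>\<^sup>+x. ennreal (beta_prime_density p q x * x powr r * (1 + x) powr k) \<partial>lborel)
         = ennreal (Gamma (p + q) / (Gamma p * Gamma q) * Beta (p + r) (q - r - k))"
proof -
  define C where "C = Gamma (p + q) / (Gamma p * Gamma q)"
  have C: "0 \<le> C" unfolding C_def using p q by simp
  have "ennreal (beta_prime_density p q x * x powr r * (1 + x) powr k)
      = ennreal C * (ennreal (x powr (p + r - 1) / (1 + x) powr (p + r + (q - r - k))) * indicator {0<..} x)"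
    for x :: real
  proof (cases "0 < x")
    case True
    have "x powr (p - 1) * x powr r = x powr (p + r - 1)"
      by (simp add: algebra_simps flip: powr_add)
    moreover have "(1 + x) powr k / (1 + x) powr (p + q) = 1 / (1 + x) powr (p + r + (q - r - k))"
      using True by (simp add: powr_diff [symmetric] powr_minus_divide [symmetric] algebra_simps)
    ultimately have "beta_prime_density p q x * x powr r * (1 + x) powr k
        = C * (x powr (p + r - 1) / (1 + x) powr (p + r + (q - r - k)))"
      using True unfolding beta_prime_density_def C_def by (simp add: field_simps)
    then show ?thesis
      using True C by (simp flip: ennreal_mult)
  qed (simp add: beta_prime_density_nonpos)
  then have "(\<integral>\<^sup>+x. ennreal (beta_prime_density p q x * x powr r * (1 + x) powr k) \<partial>lborel)
      = ennreal C * ennreal (Beta (p + r) (q - r - k))"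
    using nn_integral_beta_prime_kernel[of "p + r" "q - r - k"] r k
    by (simp add: nn_integral_cmult)
  also have "\<dots> = ennreal (C * Beta (p + r) (q - r - k))"
    using C Beta_real_pos[of "p + r" "q - r - k"] r k by (simp add: ennreal_mult)
  finally show ?thesis unfolding C_def .
qed

lemma powr_add_le_mult:
  fixes x y s :: real
  assumes x: "0 < x" and y: "0 < y"
  defines "r \<equiv> min s 0 / 2" and "k \<equiv> max s 0"
  shows "(x + y) powr s \<le> (x powr r * (1 + x) powr k) * (y powr r * (1 + y) powr k)"
proof (cases "0 \<le> s")
  case True
  then have rk: "r = 0" "k = s"
    by (simp_all add: r_def k_def)
  have "x + y \<le> (1 + x) * (1 + y)"
    using x y by (simp add: algebra_simps)
  then have "(x + y) powr s \<le> ((1 + x) * (1 + y)) powr s"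
    using x y True by (intro powr_mono2) simp_all
  also have "\<dots> = (x powr r * (1 + x) powr k) * (y powr r * (1 + y) powr k)"
    using x y by (simp add: rk powr_mult)
  finally show ?thesis .
next
  case False
  then have rk: "r = s / 2" "k = 0"
    by (simp_all add: r_def k_def)
  have "x * y \<le> (x + y)\<^sup>2"
    using x y by (simp add: power2_eq_square algebra_simps)
  have "(x + y) powr s = ((x + y)\<^sup>2) powr (s / 2)"
    using x y by (simp add: power2_powr)
  also have "\<dots> \<le> (x * y) powr (s / 2)"
    using \<open>x * y \<le> (x + y)\<^sup>2\<close> x y False by (intro powr_mono2') simp_all
  also have "\<dots> = (x powr r * (1 + x) powr k) * (y powr r * (1 + y) powr k)"
    using x y by (simp add: rk powr_mult)
  finally show ?thesis .
qed

lemma nn_integral_beta_prime_pair_powr_finite: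
  fixes a b s :: real
  assumes a: "0 < a" and b: "0 < b" and s: "- 2 * a < s" "s < b"
  shows "(\<integral>\<^sup>+y. \<integral>\<^sup>+x. ennreal (beta_prime_density a b x * beta_prime_density a b y * (x + y) powr s)
           \<partial>lborel \<partial>lborel) < \<infinity>"
proof -
  define r where "r = min s 0 / 2"
  define k where "k = max s 0"
  have rk: "- a < r" "r + k < b"
    using a b s by (auto simp: r_def k_def min_def max_def)
  define \<phi> where "\<phi> x = ennreal (beta_prime_density a b x * x powr r * (1 + x) powr k)" for x :: real
  have "ennreal (beta_prime_density a b x * beta_prime_density a b y * (x + y) powr s) \<le> \<phi> x * \<phi> y"
    for x y :: real
  proof (cases "0 < x \<and> 0 < y")
    case True
    have "0 \<le> beta_prime_density a b x * beta_prime_density a b y"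
      using a b by (simp add: beta_prime_density_nonneg)
    with True have "beta_prime_density a b x * beta_prime_density a b y * (x + y) powr s
        \<le> beta_prime_density a b x * beta_prime_density a b y
           * ((x powr r * (1 + x) powr k) * (y powr r * (1 + y) powr k))"
      unfolding r_def k_def by (intro mult_left_mono powr_add_le_mult) simp_all
    also have "\<dots> = (beta_prime_density a b x * x powr r * (1 + x) powr k)
                    * (beta_prime_density a b y * y powr r * (1 + y) powr k)"
      by (simp only: mult_ac)
    finally show ?thesis
      using a b unfolding \<phi>_def
      by (simp add: beta_prime_density_nonneg ennreal_leI flip: ennreal_mult)
  next
    case False
    then have "beta_prime_density a b x = 0 \<or> beta_prime_density a b y = 0"
      by (auto simp: beta_prime_density_nonpos)
    then show ?thesis
      by auto
  qed
  then have "(\<integral>\<^sup>+y. \<integral>\<^sup>+x. ennreal (beta_prime_density a b x * beta_prime_density a b y * (x + y) powr s)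
               \<partial>lborel \<partial>lborel) \<le> (\<integral>\<^sup>+y. \<integral>\<^sup>+x. \<phi> x * \<phi> y \<partial>lborel \<partial>lborel)"
    by (intro nn_integral_mono)
  also have "\<dots> = (\<integral>\<^sup>+x. \<phi> x \<partial>lborel) * (\<integral>\<^sup>+y. \<phi> y \<partial>lborel)"
    unfolding \<phi>_def by (simp add: nn_integral_multc nn_integral_cmult)
  also have "\<dots> < \<infinity>"
    using nn_integral_beta_prime_powr_mult[OF a b rk] unfolding \<phi>_def
    by (simp add: ennreal_mult_less_top)
  finally show ?thesis .
qed

lemma beta_prime_density_sum_diff:
  fixes a b u v :: real
  assumes u: "0 < u" and v: "\<bar>v\<bar> < 1"
  shows "beta_prime_density a b (u + u * v) * beta_prime_density a b (u - u * v)
       = (Gamma (a + b) / (Gamma a * Gamma b))\<^sup>2 * u powr (2 * (a - 1)) * (1 - v\<^sup>2) powr (a - 1)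
           / (1 + u) powr (2 * (a + b)) * (1 - (u * v / (1 + u))\<^sup>2) powr (- (a + b))"
proof -
  define w where "w = 1 + u"
  define z where "z = (u * v / w)\<^sup>2"
  have w: "0 < w" and v2: "0 < 1 - v\<^sup>2"
    using u v by (simp_all add: w_def abs_square_less_1)
  have uv: "\<bar>u * v\<bar> < u"
    using mult_strict_left_mono[OF v u] u by (simp add: abs_mult)
  then have z: "\<bar>z\<bar> < 1"
    using w by (simp add: z_def w_def abs_square_less_1 abs_divide)
  have xy: "0 < u + u * v" "0 < u - u * v"
    using uv abs_ge_self[of "u * v"] abs_ge_minus_self[of "u * v"] by linarith+
  have prod: "(u + u * v) * (u - u * v) = u\<^sup>2 * (1 - v\<^sup>2)"
    by (simp add: algebra_simps power2_eq_square)
  have "w\<^sup>2 * (1 - z) = w\<^sup>2 - (u * v)\<^sup>2"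
    using w by (simp add: z_def power_divide field_simps)
  also have "\<dots> = (1 + (u + u * v)) * (1 + (u - u * v))"
    by (simp add: w_def algebra_simps power2_eq_square)
  finally have wz: "(1 + (u + u * v)) * (1 + (u - u * v)) = w\<^sup>2 * (1 - z)" ..
  have "beta_prime_density a b (u + u * v) * beta_prime_density a b (u - u * v)
      = (Gamma (a + b) / (Gamma a * Gamma b))\<^sup>2 * ((u + u * v) powr (a - 1) * (u - u * v) powr (a - 1))
          / ((1 + (u + u * v)) powr (a + b) * (1 + (u - u * v)) powr (a + b))"
    using xy unfolding beta_prime_density_def by (simp add: power2_eq_square mult_ac)
  also have "\<dots> = (Gamma (a + b) / (Gamma a * Gamma b))\<^sup>2 * (u\<^sup>2 * (1 - v\<^sup>2)) powr (a - 1)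
                    / (w\<^sup>2 * (1 - z)) powr (a + b)"
    unfolding prod [symmetric] wz [symmetric] using xy by (simp add: powr_mult)
  also have "\<dots> = (Gamma (a + b) / (Gamma a * Gamma b))\<^sup>2 * u powr (2 * (a - 1)) * (1 - v\<^sup>2) powr (a - 1)
                    / w powr (2 * (a + b)) * (1 - z) powr (- (a + b))"
    unfolding powr_minus_divide using u w v2 z by (simp add: powr_mult power2_powr abs_less_iff)
  finally show ?thesis
    unfolding w_def z_def .
qed

lemma beta_prime_density_sum_diff_sums:
  fixes a b u v :: real
  assumes u: "0 < u" and v: "\<bar>v\<bar> < 1"
  shows "(\<lambda>n. (Gamma (a + b) / (Gamma a * Gamma b))\<^sup>2 * pochhammer (a + b) n / fact n
               * (u powr (2 * a + 2 * real n - 2) / (1 + u) powr (2 * a + 2 * b + 2 * real n))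
               * (v ^ (2 * n) * (1 - v\<^sup>2) powr (a - 1)))
         sums (beta_prime_density a b (u + u * v) * beta_prime_density a b (u - u * v))"
proof -
  define K where "K = (Gamma (a + b) / (Gamma a * Gamma b))\<^sup>2 * u powr (2 * (a - 1)) * (1 - v\<^sup>2) powr (a - 1)
                      / (1 + u) powr (2 * (a + b))"
  define z where "z = (u * v / (1 + u))\<^sup>2"
  have "\<bar>u * v\<bar> < u"
    using mult_strict_left_mono[OF v u] u by (simp add: abs_mult)
  then have "\<bar>u * v\<bar> < 1 + u"
    by linarith
  then have z: "\<bar>z\<bar> < 1"
    using u by (simp add: z_def abs_square_less_1 abs_divide)
  have "K * (pochhammer (a + b) n / fact n * z ^ n)
      = (Gamma (a + b) / (Gamma a * Gamma b))\<^sup>2 * pochhammer (a + b) n / fact n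
        * (u powr (2 * a + 2 * real n - 2) / (1 + u) powr (2 * a + 2 * b + 2 * real n))
        * (v ^ (2 * n) * (1 - v\<^sup>2) powr (a - 1))" for n
  proof -
    have "u powr (2 * (a - 1)) * u ^ (2 * n) = u powr (2 * a + 2 * real n - 2)"
      using powr_mult_power[OF u, of "2 * (a - 1)" "2 * n"] by (simp add: algebra_simps)
    moreover have "(1 + u) powr (2 * (a + b)) * (1 + u) ^ (2 * n) = (1 + u) powr (2 * a + 2 * b + 2 * real n)"
      using powr_mult_power[of "1 + u" "2 * (a + b)" "2 * n"] u by (simp add: algebra_simps)
    ultimately show ?thesis
      unfolding K_def z_def using u
      by (simp add: power_mult_distrib power_divide power_mult [symmetric] field_simps)
  qed
  with sums_mult[OF pochhammer_binomial_sums[OF z, of "a + b"], of K] show ?thesis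
    unfolding beta_prime_density_sum_diff[OF u v] K_def z_def by simp
qed

lemma beta_prime_pair_sum_diff_sums:
  fixes a b s u v :: real
  assumes u: "0 < u" and v: "\<bar>v\<bar> < 1"
  shows "(\<lambda>n. (Gamma (a + b) / (Gamma a * Gamma b))\<^sup>2 * 2 powr (s + 1) * pochhammer (a + b) n / fact n
               * (u powr (2 * a + s + 2 * real n - 1) / (1 + u) powr (2 * a + 2 * b + 2 * real n))
               * (v ^ (2 * n) * (1 - v\<^sup>2) powr (a - 1)))
         sums (2 * \<bar>u\<bar> * (2 * u) powr s
               * (beta_prime_density a b (u + u * v) * beta_prime_density a b (u - u * v)))"
proof -
  define C where "C n = (Gamma (a + b) / (Gamma a * Gamma b))\<^sup>2 * pochhammer (a + b) n / fact n" for n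
  define H where "H n = v ^ (2 * n) * (1 - v\<^sup>2) powr (a - 1)" for n
  have "u powr (s + 1) * u powr (2 * a + 2 * real n - 2) = u powr (2 * a + s + 2 * real n - 1)" for n
    by (simp add: algebra_simps flip: powr_add)
  then have coeff: "2 powr (s + 1) * u powr (s + 1)
        * (C n * (u powr (2 * a + 2 * real n - 2) / (1 + u) powr (2 * a + 2 * b + 2 * real n)) * H n)
      = (Gamma (a + b) / (Gamma a * Gamma b))\<^sup>2 * 2 powr (s + 1) * pochhammer (a + b) n / fact n
        * (u powr (2 * a + s + 2 * real n - 1) / (1 + u) powr (2 * a + 2 * b + 2 * real n)) * H n" for n
    by (simp add: C_def field_simps)
  have weight: "2 powr (s + 1) * u powr (s + 1) = 2 * \<bar>u\<bar> * (2 * u) powr s"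
    using u by (simp add: powr_add powr_mult)
  have "(\<lambda>n. (Gamma (a + b) / (Gamma a * Gamma b))\<^sup>2 * 2 powr (s + 1) * pochhammer (a + b) n / fact n
               * (u powr (2 * a + s + 2 * real n - 1) / (1 + u) powr (2 * a + 2 * b + 2 * real n)) * H n)
      sums (2 powr (s + 1) * u powr (s + 1)
            * (beta_prime_density a b (u + u * v) * beta_prime_density a b (u - u * v)))"
    using sums_mult[OF beta_prime_density_sum_diff_sums[of u v a b, OF u v], of "2 powr (s + 1) * u powr (s + 1)"]
    unfolding C_def [symmetric] H_def [symmetric] coeff .
  then show ?thesis
    unfolding weight H_def .
qed

lemma beta_prime_pair_sum_diff_expansion:
  fixes a b s u v :: real
  defines "c \<equiv> \<lambda>n. (Gamma (a + b) / (Gamma a * Gamma b))\<^sup>2 * 2 powr (s + 1) * pochhammer (a + b) n / fact n"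
    and "g \<equiv> \<lambda>n. u powr (2 * a + s + 2 * real n - 1) / (1 + u) powr (2 * a + 2 * b + 2 * real n)"
    and "h \<equiv> \<lambda>n. v ^ (2 * n) * (1 - v\<^sup>2) powr (a - 1)"
  assumes a: "0 < a" and b: "0 < b"
  shows "ennreal (2 * \<bar>u\<bar>) * ennreal (beta_prime_density a b (u + u * v) * beta_prime_density a b (u - u * v)
           * (2 * u) powr s)
       = (\<Sum>n. ennreal (c n) * (ennreal (g n) * indicator {0<..} u) * (ennreal (h n) * indicator {-1<..<1} v))"
proof (cases "0 < u \<and> \<bar>v\<bar> < 1")
  case True
  then have u: "0 < u" and v: "\<bar>v\<bar> < 1" by auto
  define f where "f = beta_prime_density a b"
  have nonneg: "0 \<le> c n" "0 \<le> g n" "0 \<le> h n" for n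
    unfolding c_def g_def h_def using a b pochhammer_pos[of "a + b" n] by simp_all
  have "ennreal (2 * \<bar>u\<bar>) * ennreal (f (u + u * v) * f (u - u * v) * (2 * u) powr s)
      = ennreal (2 * \<bar>u\<bar> * (2 * u) powr s * (f (u + u * v) * f (u - u * v)))"
    using a b by (subst ennreal_mult [symmetric]) (simp_all add: f_def beta_prime_density_nonneg mult_ac)
  also have "\<dots> = (\<Sum>n. ennreal (c n * g n * h n))"
  proof (rule suminf_ennreal_eq [symmetric])
    show "0 \<le> c n * g n * h n" for n
      using nonneg by simp
    show "(\<lambda>n. c n * g n * h n) sums (2 * \<bar>u\<bar> * (2 * u) powr s * (f (u + u * v) * f (u - u * v)))"
      using beta_prime_pair_sum_diff_sums[OF u v, of a b s] unfolding f_def c_def g_def h_def .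
  qed
  also have "\<dots> = (\<Sum>n. ennreal (c n) * (ennreal (g n) * indicator {0<..} u) * (ennreal (h n) * indicator {-1<..<1} v))"
    using u v nonneg by (simp add: ennreal_mult abs_less_iff)
  finally show ?thesis
    unfolding f_def .
next
  case False
  have "u + u * v \<le> 0 \<or> u - u * v \<le> 0"
  proof (cases "0 < u")
    case True
    with False have "u \<le> \<bar>u * v\<bar>"
      by (simp add: abs_mult)
    then show ?thesis
      by (cases "0 \<le> u * v") auto
  qed linarith
  then show ?thesis
    using False by (auto simp: beta_prime_density_nonpos indicator_def)
qed

lemma nn_integral_beta_prime_pair_powr_eq_suminf:
  fixes a b s :: real
  assumes a: "0 < a" and b: "0 < b" and s: "- 2 * a < s" "s < 2 * b"
  shows "(\<integral>\<^sup>+y. \<integral>\<^sup>+x. ennreal (beta_prime_density a b x * beta_prime_density a b y * (x + y) powr s)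
           \<partial>lborel \<partial>lborel)
       = (\<Sum>n. ennreal (2 powr (2 * a + s) * Gamma (a + b) ^ 2 * Gamma (2 * b - s) * Gamma (2 * a + s)
                          / (Gamma (2 * a) * Gamma b ^ 2 * Gamma (2 * a + 2 * b))
                          * hyp3F2_coeff (a + s / 2) (a + (s + 1) / 2) (1 / 2) (a + 1 / 2) (a + b + 1 / 2) n))"
    (is "_ = ?rhs")
proof -
  define f where "f = beta_prime_density a b"
  define c where "c n = (Gamma (a + b) / (Gamma a * Gamma b))\<^sup>2 * 2 powr (s + 1) * pochhammer (a + b) n / fact n"
    for n
  define g where "g n u = u powr (2 * a + s + 2 * real n - 1) / (1 + u) powr (2 * a + 2 * b + 2 * real n)"
    for n and u :: real
  define h where "h n v = v ^ (2 * n) * (1 - v\<^sup>2) powr (a - 1)" for n and v :: real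
  have c_nonneg: "0 \<le> c n" for n
    unfolding c_def using a b pochhammer_pos[of "a + b" n] by simp
  have [measurable]: "(\<lambda>u. g n u) \<in> borel_measurable borel" for n
    unfolding g_def by measurable
  have [measurable]: "(\<lambda>v. h n v) \<in> borel_measurable borel" for n
    unfolding h_def by measurable
  have [measurable]: "f \<in> borel_measurable borel"
    unfolding f_def by measurable
  have expand: "ennreal (2 * \<bar>u\<bar>) * ennreal (f (u + u * v) * f (u - u * v) * ((u + u * v) + (u - u * v)) powr s)
      = (\<Sum>n. ennreal (c n) * (ennreal (g n u) * indicator {0<..} u) * (ennreal (h n v) * indicator {-1<..<1} v))"
    for u v :: real
  proof -
    have "(u + u * v) + (u - u * v) = 2 * u"
      by simp
    then show ?thesis
      unfolding f_def c_def g_def h_def by (rule ssubst) (rule beta_prime_pair_sum_diff_expansion[OF a b])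
  qed
  have "(\<integral>\<^sup>+y. \<integral>\<^sup>+x. ennreal (f x * f y * (x + y) powr s) \<partial>lborel \<partial>lborel)
      = (\<integral>\<^sup>+u. ennreal (2 * \<bar>u\<bar>)
           * (\<integral>\<^sup>+v. ennreal (f (u + u * v) * f (u - u * v) * ((u + u * v) + (u - u * v)) powr s) \<partial>lborel)
         \<partial>lborel)"
    by (rule nn_integral_lborel_sum_diff[of "\<lambda>x y. ennreal (f x * f y * (x + y) powr s)"]) measurable
  also have "\<dots> = (\<integral>\<^sup>+u. \<integral>\<^sup>+v. (\<Sum>n. ennreal (c n) * (ennreal (g n u) * indicator {0<..} u)
                                  * (ennreal (h n v) * indicator {-1<..<1} v)) \<partial>lborel \<partial>lborel)"
    by (simp add: nn_integral_cmult flip: expand)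
  also have "\<dots> = (\<Sum>n. (\<integral>\<^sup>+u. ennreal (c n) * (ennreal (g n u) * indicator {0<..} u) \<partial>lborel)
                        * (\<integral>\<^sup>+v. ennreal (h n v) * indicator {-1<..<1} v \<partial>lborel))"
    by (rule nn_integral_suminf_products) measurable
  also have "\<dots> = (\<Sum>n. ennreal (c n * Beta (2 * a + s + 2 * real n) (2 * b - s) * Beta (real n + 1/2) a))"
  proof -
    have "(\<integral>\<^sup>+u. ennreal (g n u) * indicator {0<..} u \<partial>lborel) = ennreal (Beta (2 * a + s + 2 * real n) (2 * b - s))"
      for n
      using nn_integral_beta_prime_kernel[of "2 * a + s + 2 * real n" "2 * b - s"] s unfolding g_def
      by (simp add: algebra_simps)
    moreover have "(\<integral>\<^sup>+v. ennreal (h n v) * indicator {-1<..<1} v \<partial>lborel) = ennreal (Beta (real n + 1/2) a)" for n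
      unfolding h_def by (rule nn_integral_even_power_beta_kernel[OF a])
    moreover have "0 \<le> Beta (2 * a + s + 2 * real n) (2 * b - s)" "0 \<le> Beta (real n + 1/2) a" for n
      using a s by (simp_all add: Beta_real_pos less_imp_le)
    ultimately show ?thesis
      using c_nonneg by (simp add: nn_integral_cmult ennreal_mult)
  qed
  also have "\<dots> = ?rhs"
    using beta_prime_series_coeff_eq[OF a b, of s] s unfolding c_def by simp
  finally show ?thesis unfolding f_def .
qed

lemma nn_integral_beta_prime_pair_powr:
  fixes a b s :: real
  defines "I \<equiv> 2 powr (2 * a + s) * Gamma (a + b) ^ 2 * Gamma (2 * b - s) * Gamma (2 * a + s)
                  / (Gamma (2 * a) * Gamma b ^ 2 * Gamma (2 * a + 2 * b))
                  * hyp3F2 (a + s / 2) (a + (s + 1) / 2) (1 / 2) (a + 1 / 2) (a + b + 1 / 2) 1"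
  assumes a: "0 < a" and b: "0 < b" and s: "- 2 * a < s" "s < b"
  shows "(\<integral>\<^sup>+y. \<integral>\<^sup>+x. ennreal (beta_prime_density a b x * beta_prime_density a b y * (x + y) powr s)
           \<partial>lborel \<partial>lborel) = ennreal I"
    and "0 \<le> I"
proof -
  define R where "R = 2 powr (2 * a + s) * Gamma (a + b) ^ 2 * Gamma (2 * b - s) * Gamma (2 * a + s)
                  / (Gamma (2 * a) * Gamma b ^ 2 * Gamma (2 * a + 2 * b))"
  define t where "t = hyp3F2_coeff (a + s / 2) (a + (s + 1) / 2) (1 / 2) (a + 1 / 2) (a + b + 1 / 2)"
  have "0 < a + s / 2" "0 < a + (s + 1) / 2"
    using s by (simp_all add: field_simps)
  then have t: "0 \<le> t n" for n
    unfolding t_def using a b by (intro less_imp_le hyp3F2_coeff_pos) simp_all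
  have R: "0 < R"
    unfolding R_def using a b s by (intro divide_pos_pos mult_pos_pos) (simp_all add: Gamma_real_neq_0)
  have series: "(\<integral>\<^sup>+y. \<integral>\<^sup>+x. ennreal (beta_prime_density a b x * beta_prime_density a b y * (x + y) powr s)
           \<partial>lborel \<partial>lborel) = (\<Sum>n. ennreal (R * t n))"
    unfolding R_def t_def using nn_integral_beta_prime_pair_powr_eq_suminf[OF a b] s b by simp
  then have "summable (\<lambda>n. R * t n)"
    using nn_integral_beta_prime_pair_powr_finite[OF a b s] R t
    by (intro summable_suminf_not_top) (simp_all add: less_imp_le)
  then have "summable t"
    using R by (simp add: summable_cmult_iff)
  moreover have I: "I = R * (\<Sum>n. t n)"
    unfolding I_def R_def t_def hyp3F2_one ..
  ultimately show "0 \<le> I"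
    using R t by (simp add: suminf_nonneg)
  show "(\<integral>\<^sup>+y. \<integral>\<^sup>+x. ennreal (beta_prime_density a b x * beta_prime_density a b y * (x + y) powr s)
           \<partial>lborel \<partial>lborel) = ennreal I"
    unfolding series I using \<open>summable t\<close> R t
    by (simp add: suminf_ennreal2 suminf_mult less_imp_le)
qed

lemma (in prob_space) nn_integral_indep_distributed:
  fixes X Y :: "'a \<Rightarrow> real" and f g :: "real \<Rightarrow> ennreal" and G :: "real \<Rightarrow> real \<Rightarrow> ennreal"
  assumes X: "distributed M lborel X f" and Y: "distributed M lborel Y g"
    and indep: "indep_var borel X borel Y"
    and [measurable]: "(\<lambda>(x, y). G x y) \<in> borel_measurable (borel \<Otimes>\<^sub>M borel)"
  shows "(\<integral>\<^sup>+\<omega>. G (X \<omega>) (Y \<omega>) \<partial>M) = (\<integral>\<^sup>+y. \<integral>\<^sup>+x. f x * g y * G x y \<partial>lborel \<partial>lborel)"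
proof -
  have [measurable]: "f \<in> borel_measurable borel" "g \<in> borel_measurable borel"
    using distributed_borel_measurable[OF X] distributed_borel_measurable[OF Y] by simp_all
  \<comment> \<open>\<open>indep_var\<close> only depends on the sigma-algebras, and \<open>sets lborel = sets borel\<close>\<close>
  have "distributed M (lborel \<Otimes>\<^sub>M lborel) (\<lambda>\<omega>. (X \<omega>, Y \<omega>)) (\<lambda>(x, y). f x * g y)"
    using X Y indep by (intro distributed_joint_indep)
      (simp_all add: lborel.sigma_finite_measure_axioms indep_var_def indep_vars_def bool.case_eq_if)
  from distributed_nn_integral[OF this, of "\<lambda>(x, y). G x y"] show ?thesis
    by (simp add: lborel_pair.nn_integral_snd [symmetric] split_beta')
qed

theorem proposition5:
  fixes M :: "'w measure" and X Y :: "'w \<Rightarrow> real" and a b s :: real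
  assumes "prob_space M"
    and "0 < a" and "0 < b" and "- 2 * a < s" and "s < b"
    and "distributed M lborel X (\<lambda>x. ennreal (beta_prime_density a b x))"
    and "distributed M lborel Y (\<lambda>x. ennreal (beta_prime_density a b x))"
    and "prob_space.indep_var M borel X borel Y"
  shows "integrable M (\<lambda>\<omega>. (X \<omega> + Y \<omega>) powr s) \<and>
         (\<integral>\<omega>. (X \<omega> + Y \<omega>) powr s \<partial>M) =
           2 powr (2 * a + s) * Gamma (a + b) ^ 2 * Gamma (2 * b - s) * Gamma (2 * a + s)
           / (Gamma (2 * a) * Gamma b ^ 2 * Gamma (2 * a + 2 * b))
           * hyp3F2 (a + s / 2) (a + (s + 1) / 2) (1 / 2) (a + 1 / 2) (a + b + 1 / 2) 1"
proof -
  interpret prob_space M by fact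
  let ?I = "2 powr (2 * a + s) * Gamma (a + b) ^ 2 * Gamma (2 * b - s) * Gamma (2 * a + s)
           / (Gamma (2 * a) * Gamma b ^ 2 * Gamma (2 * a + 2 * b))
           * hyp3F2 (a + s / 2) (a + (s + 1) / 2) (1 / 2) (a + 1 / 2) (a + b + 1 / 2) 1"
  have [measurable]: "X \<in> borel_measurable M" "Y \<in> borel_measurable M"
    using distributed_measurable[OF assms(6)] distributed_measurable[OF assms(7)] by simp_all
  have E: "(\<integral>\<^sup>+\<omega>. ennreal ((X \<omega> + Y \<omega>) powr s) \<partial>M) = ennreal ?I"
    using nn_integral_indep_distributed[OF assms(6-8), of "\<lambda>x y. ennreal ((x + y) powr s)"]
      nn_integral_beta_prime_pair_powr(1)[OF assms(2-5)] assms(2,3)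
    by (simp add: ennreal_mult beta_prime_density_nonneg)
  then have int: "integrable M (\<lambda>\<omega>. (X \<omega> + Y \<omega>) powr s)"
    by (intro integrableI_nonneg) simp_all
  with E have "ennreal (\<integral>\<omega>. (X \<omega> + Y \<omega>) powr s \<partial>M) = ennreal ?I"
    by (simp add: nn_integral_eq_integral)
  then show ?thesis
    using int nn_integral_beta_prime_pair_powr(2)[OF assms(2-5)]
    by (subst (asm) ennreal_inj) (simp_all add: integral_nonneg_AE)
qed

end
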